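(* Let $A$ be a uniform algebra on a compact space $X$, let $x_0\in X$, and let $\phi$ be a selfmap of $X$ which induces an endomorphism $T$ of $A$ (i.e. $f\circ\phi\in A$ and $Tf=f\circ\phi$ for all $f\in A$). Let $\phi_n$ be the $n$-th iterate of $\phi$ and set $C_n=\sup\{\|\phi_n(x)-x_0\|: x\in X\}$. If $C_n^{1/n}\to0$ as $n\to\infty$, then $T$ is a Riesz operator.
   Context: A uniform algebra on a compact space $X$ is a closed subalgebra of $C(X)$, with the supremum norm, containing the constants and separating points. For $x,y\in X$, the norm (Gleason) distance is $\|x-y\|=\sup\{|f(x)-f(y)|: f\in A,\ \|f\|_\infty\le1\}$, i.e. the norm in $A^*$ of the difference of the evaluation functionals. A bounded operator $T$ is a Riesz operator if $\lim_{n}\left[\inf\{\|T^n-K\|:K \text{ compact}\}\right]^{1/n}=0$. *)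

theory Defs
  imports "HOL-Analysis.Analysis"
begin

text \<open>Functions are complex-valued functions on the ambient type; only their values on the
compact set X matter. A uniform algebra A is represented extensionally: it contains every
function agreeing on X with one of its members (so A is really a set of elements of C(X)).\<close>

definition supn :: "'a set \<Rightarrow> ('a \<Rightarrow> complex) \<Rightarrow> real" where
  "supn X f = Sup ((\<lambda>x. cmod (f x)) ` X)"

definition uniform_algebra :: "'a::topological_space set \<Rightarrow> ('a \<Rightarrow> complex) set \<Rightarrow> bool" where
  "uniform_algebra X A \<longleftrightarrow>
     compact X \<and>
     (\<forall>f\<in>A. continuous_on X f) \<and>
     (\<forall>f\<in>A. \<forall>g. (\<forall>x\<in>X. g x = f x) \<longrightarrow> g \<in> A) \<and>
     (\<forall>c. (\<lambda>_. c) \<in> A) \<and>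
     (\<forall>f\<in>A. \<forall>g\<in>A. (\<lambda>x. f x + g x) \<in> A) \<and>
     (\<forall>f\<in>A. \<forall>g\<in>A. (\<lambda>x. f x * g x) \<in> A) \<and>
     (\<forall>F g. (\<forall>n. F n \<in> A) \<and> continuous_on X g \<and> uniform_limit X F g sequentially \<longrightarrow> g \<in> A) \<and>
     (\<forall>x\<in>X. \<forall>y\<in>X. x \<noteq> y \<longrightarrow> (\<exists>f\<in>A. f x \<noteq> f y))"

definition gdist :: "'a set \<Rightarrow> ('a \<Rightarrow> complex) set \<Rightarrow> 'a \<Rightarrow> 'a \<Rightarrow> real" where
  "gdist X A x y = Sup {cmod (f x - f y) | f. f \<in> A \<and> supn X f \<le> 1}"

definition compact_operator_on :: "'a set \<Rightarrow> ('a \<Rightarrow> complex) set \<Rightarrow> (('a \<Rightarrow> complex) \<Rightarrow> ('a \<Rightarrow> complex)) \<Rightarrow> bool" where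
  "compact_operator_on X A K \<longleftrightarrow>
     (\<forall>f\<in>A. K f \<in> A) \<and>
     (\<forall>f\<in>A. \<forall>g\<in>A. (\<forall>x\<in>X. f x = g x) \<longrightarrow> (\<forall>x\<in>X. K f x = K g x)) \<and>
     (\<forall>f\<in>A. \<forall>g\<in>A. \<forall>c. \<forall>x\<in>X. K (\<lambda>y. f y + c * g y) x = K f x + c * K g x) \<and>
     (\<forall>F. (\<forall>n. F n \<in> A \<and> supn X (F n) \<le> 1) \<longrightarrow>
          (\<exists>r::nat\<Rightarrow>nat. strict_mono r \<and> uniformly_Cauchy_on X (\<lambda>n. K (F (r n)))))"

definition opnorm :: "'a set \<Rightarrow> ('a \<Rightarrow> complex) set \<Rightarrow> (('a \<Rightarrow> complex) \<Rightarrow> ('a \<Rightarrow> complex)) \<Rightarrow> real" where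
  "opnorm X A S = Sup {supn X (S f) | f. f \<in> A \<and> supn X f \<le> 1}"

definition ess_norm :: "'a set \<Rightarrow> ('a \<Rightarrow> complex) set \<Rightarrow> (('a \<Rightarrow> complex) \<Rightarrow> ('a \<Rightarrow> complex)) \<Rightarrow> real" where
  "ess_norm X A S = Inf {opnorm X A (\<lambda>f x. S f x - K f x) | K. compact_operator_on X A K}"

definition riesz_op :: "'a set \<Rightarrow> ('a \<Rightarrow> complex) set \<Rightarrow> (('a \<Rightarrow> complex) \<Rightarrow> ('a \<Rightarrow> complex)) \<Rightarrow> bool" where
  "riesz_op X A T \<longleftrightarrow> (\<lambda>n. ess_norm X A (T ^^ n) powr (1 / real n)) \<longlonglongrightarrow> 0"

end

theory Submission
  imports Defs
begin

text \<open>The rank-one operator \<open>K f = f(x\<^sub>0)\<close> (constant function) is compact, and for \<open>f\<close> in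
the unit ball \<open>|f(\<phi>\<^sub>n x) - f(x\<^sub>0)| \<le> \<parallel>\<phi>\<^sub>n x - x\<^sub>0\<parallel> \<le> C\<^sub>n\<close>. Hence the essential norm of
\<open>T\<^sup>n\<close> is at most \<open>C\<^sub>n\<close>, and \<open>C\<^sub>n\<^sup>1\<^sup>/\<^sup>n \<rightarrow> 0\<close> gives the Riesz property.\<close>

lemma supn_le:
  assumes "X \<noteq> {}" "\<And>x. x \<in> X \<Longrightarrow> cmod (f x) \<le> B"
  shows "supn X f \<le> B"
  unfolding supn_def using assms by (intro cSup_least) auto

lemma supn_zero: "X \<noteq> {} \<Longrightarrow> supn X (\<lambda>_. 0) = 0"
  unfolding supn_def by (simp add: image_constant_conv)

lemma uniform_algebra_compact: "uniform_algebra X A \<Longrightarrow> compact X"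
  by (simp add: uniform_algebra_def)

lemma uniform_algebra_continuous_on: "uniform_algebra X A \<Longrightarrow> f \<in> A \<Longrightarrow> continuous_on X f"
  unfolding uniform_algebra_def by (drule conjunct1[OF conjunct2]) (erule bspec)

lemma uniform_algebra_const: "uniform_algebra X A \<Longrightarrow> (\<lambda>_. c) \<in> A"
  unfolding uniform_algebra_def by (drule conjunct1[OF conjunct2[OF conjunct2[OF conjunct2]]]) (erule spec)

lemma uniform_algebra_norm_le_supn:
  assumes "uniform_algebra X A" "f \<in> A" "x \<in> X"
  shows "cmod (f x) \<le> supn X f"
proof -
  have "compact (f ` X)"
    using assms by (intro compact_continuous_image uniform_algebra_continuous_on uniform_algebra_compact)
  then have "bdd_above ((\<lambda>x. cmod (f x)) ` X)"
    using bdd_above_norm[of "f ` X"] by (simp add: image_comp o_def compact_imp_bounded)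
  then show ?thesis
    unfolding supn_def using assms(3) by (intro cSup_upper) auto
qed

lemma norm_diff_le_2:
  assumes "uniform_algebra X A" "f \<in> A" "supn X f \<le> 1" "a \<in> X" "b \<in> X"
  shows "cmod (f a - f b) \<le> 2"
proof -
  have "cmod (f a - f b) \<le> cmod (f a) + cmod (f b)" by (rule norm_triangle_ineq4)
  also have "\<dots> \<le> 2"
    using uniform_algebra_norm_le_supn[OF assms(1,2) assms(4)]
      uniform_algebra_norm_le_supn[OF assms(1,2) assms(5)] assms(3) by linarith
  finally show ?thesis .
qed

lemma gdist_le_2:
  assumes "uniform_algebra X A" "a \<in> X" "b \<in> X"
  shows "gdist X A a b \<le> 2"
  unfolding gdist_def
proof (rule cSup_least)
  have "X \<noteq> {}" using assms(2) by blast
  then have "(\<lambda>_. 0) \<in> A" "supn X (\<lambda>_. 0) \<le> 1"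
    using uniform_algebra_const[OF assms(1)] by (simp_all add: supn_zero)
  then show "{cmod (f a - f b) | f. f \<in> A \<and> supn X f \<le> 1} \<noteq> {}"
    by blast
qed (use assms norm_diff_le_2 in blast)

lemma norm_diff_le_gdist:
  assumes "uniform_algebra X A" "f \<in> A" "supn X f \<le> 1" "a \<in> X" "b \<in> X"
  shows "cmod (f a - f b) \<le> gdist X A a b"
proof -
  have "bdd_above {cmod (f a - f b) | f. f \<in> A \<and> supn X f \<le> 1}"
    using norm_diff_le_2[OF assms(1) _ _ assms(4,5)] by (intro bdd_aboveI[where M=2]) auto
  moreover have "cmod (f a - f b) \<in> {cmod (g a - g b) | g. g \<in> A \<and> supn X g \<le> 1}"
    using assms(2,3) by blast
  ultimately show ?thesis
    unfolding gdist_def by (simp add: cSup_upper)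
qed

lemma compact_operator_on_eval:
  assumes "uniform_algebra X A" "x0 \<in> X"
  shows "compact_operator_on X A (\<lambda>f _. f x0)"
  unfolding compact_operator_on_def
proof (intro conjI ballI allI impI)
  fix F :: "nat \<Rightarrow> 'a \<Rightarrow> complex"
  assume F: "\<forall>n. F n \<in> A \<and> supn X (F n) \<le> 1"
  have "\<forall>n. F n x0 \<in> cball 0 1"
    using F uniform_algebra_norm_le_supn[OF assms(1) _ assms(2)] by (meson mem_cball_0 order_trans)
  then obtain l r where r: "strict_mono r" "((\<lambda>n. F n x0) \<circ> r) \<longlonglongrightarrow> l"
    using compact_cball[THEN compact_imp_seq_compact] by (metis seq_compactE)
  have "Cauchy ((\<lambda>n. F n x0) \<circ> r)" using r(2) by (rule LIMSEQ_imp_Cauchy)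
  then have "uniformly_Cauchy_on X (\<lambda>n _. F (r n) x0)"
    unfolding uniformly_Cauchy_on_def Cauchy_def by simp
  with r(1) show "\<exists>r. strict_mono r \<and> uniformly_Cauchy_on X (\<lambda>n _. F (r n) x0)"
    by blast
qed (use assms uniform_algebra_const in auto)

lemma compact_operator_on_bounded:
  assumes A: "uniform_algebra X A" and K: "compact_operator_on X A K"
  obtains M where "\<And>f x. f \<in> A \<Longrightarrow> supn X f \<le> 1 \<Longrightarrow> x \<in> X \<Longrightarrow> cmod (K f x) \<le> M"
proof -
  have "\<exists>M. \<forall>f\<in>A. supn X f \<le> 1 \<longrightarrow> (\<forall>x\<in>X. cmod (K f x) \<le> M)"
  proof (rule ccontr)
    assume unbounded: "\<not> (\<exists>M. \<forall>f\<in>A. supn X f \<le> 1 \<longrightarrow> (\<forall>x\<in>X. cmod (K f x) \<le> M))"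
    have "\<forall>n::nat. \<exists>f. f \<in> A \<and> supn X f \<le> 1 \<and> (\<exists>x\<in>X. real n < cmod (K f x))"
    proof
      fix n :: nat
      show "\<exists>f. f \<in> A \<and> supn X f \<le> 1 \<and> (\<exists>x\<in>X. real n < cmod (K f x))"
        using unbounded[unfolded not_ex, THEN spec, of "real n"] by (auto simp: not_le)
    qed
    then have "\<exists>F. \<forall>n. F n \<in> A \<and> supn X (F n) \<le> 1 \<and> (\<exists>x\<in>X. real n < cmod (K (F n) x))"
      by (rule choice)
    then obtain F where F: "\<forall>n. F n \<in> A \<and> supn X (F n) \<le> 1 \<and> (\<exists>x\<in>X. real n < cmod (K (F n) x))"
      by (rule exE)
    then have "\<exists>\<xi>. \<forall>n. \<xi> n \<in> X \<and> real n < cmod (K (F n) (\<xi> n))"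
      by (intro choice) blast
    then obtain \<xi> where \<xi>: "\<forall>n. \<xi> n \<in> X \<and> real n < cmod (K (F n) (\<xi> n))"
      by (rule exE)
    have FA: "F n \<in> A" and F1: "supn X (F n) \<le> 1" for n
      using F by auto
    have \<xi>_in: "\<xi> n \<in> X" and \<xi>_large: "real n < cmod (K (F n) (\<xi> n))" for n
      using \<xi> by auto
    obtain r where r: "strict_mono r" and Cauchy: "uniformly_Cauchy_on X (\<lambda>n. K (F (r n)))"
      using K FA F1 unfolding compact_operator_on_def by blast
    obtain N where N: "\<And>x m. x \<in> X \<Longrightarrow> m \<ge> N \<Longrightarrow> dist (K (F (r m)) x) (K (F (r N)) x) < 1"
      using Cauchy unfolding uniformly_Cauchy_on_def by (metis order_refl zero_less_one)
    define B where "B = supn X (K (F (r N)))"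
    have "K (F (r N)) \<in> A" using K FA unfolding compact_operator_on_def by blast
    then have B: "cmod (K (F (r N)) x) \<le> B" if "x \<in> X" for x
      unfolding B_def using uniform_algebra_norm_le_supn[OF A _ that] by blast
    define m where "m = max N (nat \<lceil>B\<rceil> + 1)"
    have "real (r m) < cmod (K (F (r m)) (\<xi> (r m)))" by (rule \<xi>_large)
    also have "\<dots> < cmod (K (F (r N)) (\<xi> (r m))) + 1"
    proof -
      have "cmod (K (F (r m)) (\<xi> (r m)) - K (F (r N)) (\<xi> (r m))) < 1"
        using N[OF \<xi>_in, of m] unfolding m_def dist_norm by simp
      then show ?thesis
        using norm_triangle_sub[of "K (F (r m)) (\<xi> (r m))" "K (F (r N)) (\<xi> (r m))"] by linarith
    qed
    also have "\<dots> \<le> B + 1" using B[OF \<xi>_in] by simp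
    finally have "real (r m) < B + 1" .
    moreover have "m \<le> r m" using r by (rule seq_suble)
    moreover have "B + 1 \<le> real m" unfolding m_def by linarith
    ultimately show False by linarith
  qed
  with that show thesis by blast
qed

lemma supn_image_unit_ball_le:
  assumes "X \<noteq> {}"
    and "\<And>f x. f \<in> A \<Longrightarrow> supn X f \<le> 1 \<Longrightarrow> x \<in> X \<Longrightarrow> cmod (S f x) \<le> M"
    and "y \<in> {supn X (S f) | f. f \<in> A \<and> supn X f \<le> 1}"
  shows "y \<le> M"
proof -
  obtain f where f: "f \<in> A" "supn X f \<le> 1" and y: "y = supn X (S f)"
    using assms(3) by blast
  show "y \<le> M" unfolding y by (rule supn_le[OF assms(1) assms(2)[OF f]])
qed

lemma opnorm_le:
  assumes "X \<noteq> {}" "(\<lambda>_. 0) \<in> A"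
    and "\<And>f x. f \<in> A \<Longrightarrow> supn X f \<le> 1 \<Longrightarrow> x \<in> X \<Longrightarrow> cmod (S f x) \<le> M"
  shows "opnorm X A S \<le> M"
  unfolding opnorm_def
proof (rule cSup_least)
  have "supn X (\<lambda>_. 0) \<le> 1" using supn_zero[OF assms(1)] by simp
  with assms(2) show "{supn X (S f) | f. f \<in> A \<and> supn X f \<le> 1} \<noteq> {}" by blast
qed (rule supn_image_unit_ball_le[OF assms(1,3)])

lemma opnorm_nonneg:
  assumes "X \<noteq> {}" "(\<lambda>_. 0) \<in> A"
    and "\<And>f x. f \<in> A \<Longrightarrow> supn X f \<le> 1 \<Longrightarrow> x \<in> X \<Longrightarrow> cmod (S f x) \<le> M"
  shows "0 \<le> opnorm X A S"
proof -
  have zero: "supn X (\<lambda>_. 0) \<le> 1" using supn_zero[OF assms(1)] by simp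
  obtain x where x: "x \<in> X" using assms(1) by blast
  have "bdd_above ((\<lambda>x. cmod (S (\<lambda>_. 0) x)) ` X)"
    using assms(3)[OF assms(2) zero] by (intro bdd_aboveI[where M=M]) auto
  then have "0 \<le> supn X (S (\<lambda>_. 0))"
    unfolding supn_def using x by (intro cSup_upper2[of "cmod (S (\<lambda>_. 0) x)"]) auto
  also have "\<dots> \<le> opnorm X A S"
    unfolding opnorm_def
  proof (rule cSup_upper)
    show "bdd_above {supn X (S f) | f. f \<in> A \<and> supn X f \<le> 1}"
      by (rule bdd_aboveI, rule supn_image_unit_ball_le[OF assms(1,3)])
  qed (use assms(2) zero in blast)
  finally show ?thesis .
qed

lemma opnorm_minus_compact_nonneg:
  assumes A: "uniform_algebra X A" and X: "X \<noteq> {}" and K: "compact_operator_on X A K"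
    and S: "\<And>f x. f \<in> A \<Longrightarrow> supn X f \<le> 1 \<Longrightarrow> x \<in> X \<Longrightarrow> cmod (S f x) \<le> B"
  shows "0 \<le> opnorm X A (\<lambda>f x. S f x - K f x)"
proof -
  obtain M where M: "\<And>f x. f \<in> A \<Longrightarrow> supn X f \<le> 1 \<Longrightarrow> x \<in> X \<Longrightarrow> cmod (K f x) \<le> M"
    using compact_operator_on_bounded[OF A K] by blast
  have "cmod (S f x - K f x) \<le> B + M" if "f \<in> A" "supn X f \<le> 1" "x \<in> X" for f x
    using norm_triangle_ineq4[of "S f x" "K f x"] S[OF that] M[OF that] by linarith
  then show ?thesis
    by (rule opnorm_nonneg[OF X uniform_algebra_const[OF A]])
qed

lemma ess_norm_nonneg:
  assumes A: "uniform_algebra X A" and X: "X \<noteq> {}"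
    and S: "\<And>f x. f \<in> A \<Longrightarrow> supn X f \<le> 1 \<Longrightarrow> x \<in> X \<Longrightarrow> cmod (S f x) \<le> B"
  shows "0 \<le> ess_norm X A S"
  unfolding ess_norm_def
proof (rule cInf_greatest)
  obtain x0 where "x0 \<in> X" using X by blast
  then show "{opnorm X A (\<lambda>f x. S f x - K f x) | K. compact_operator_on X A K} \<noteq> {}"
    using compact_operator_on_eval[OF A] by blast
next
  fix y assume "y \<in> {opnorm X A (\<lambda>f x. S f x - K f x) | K. compact_operator_on X A K}"
  then obtain K where K: "compact_operator_on X A K" and y: "y = opnorm X A (\<lambda>f x. S f x - K f x)"
    by blast
  show "0 \<le> y" unfolding y by (rule opnorm_minus_compact_nonneg[OF A X K S])
qed

lemma ess_norm_le_opnorm_minus_compact: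
  assumes A: "uniform_algebra X A" and X: "X \<noteq> {}" and K: "compact_operator_on X A K"
    and S: "\<And>f x. f \<in> A \<Longrightarrow> supn X f \<le> 1 \<Longrightarrow> x \<in> X \<Longrightarrow> cmod (S f x) \<le> B"
  shows "ess_norm X A S \<le> opnorm X A (\<lambda>f x. S f x - K f x)"
  unfolding ess_norm_def
proof (rule cInf_lower)
  show "opnorm X A (\<lambda>f x. S f x - K f x) \<in> {opnorm X A (\<lambda>f x. S f x - K f x) | K. compact_operator_on X A K}"
    using K by blast
  show "bdd_below {opnorm X A (\<lambda>f x. S f x - K f x) | K. compact_operator_on X A K}"
  proof (rule bdd_belowI[where m=0])
    fix y assume "y \<in> {opnorm X A (\<lambda>f x. S f x - K f x) | K. compact_operator_on X A K}"
    then obtain K where K: "compact_operator_on X A K" and y: "y = opnorm X A (\<lambda>f x. S f x - K f x)"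
      by blast
    show "0 \<le> y" unfolding y by (rule opnorm_minus_compact_nonneg[OF A X K S])
  qed
qed

lemma norm_comp_le_1:
  assumes "uniform_algebra X A" "\<forall>x\<in>X. \<psi> x \<in> X" "f \<in> A" "supn X f \<le> 1" "x \<in> X"
  shows "cmod ((f \<circ> \<psi>) x) \<le> 1"
  using uniform_algebra_norm_le_supn[OF assms(1,3), of "\<psi> x"] assms(2,4,5) by simp

lemma ess_norm_composition_nonneg:
  assumes "uniform_algebra X A" "X \<noteq> {}" "\<forall>x\<in>X. \<psi> x \<in> X"
  shows "0 \<le> ess_norm X A (\<lambda>f. f \<circ> \<psi>)"
  using assms norm_comp_le_1 by (intro ess_norm_nonneg) blast+

lemma ess_norm_composition_le:
  assumes A: "uniform_algebra X A" and x0: "x0 \<in> X" and \<psi>: "\<forall>x\<in>X. \<psi> x \<in> X"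
  shows "ess_norm X A (\<lambda>f. f \<circ> \<psi>) \<le> Sup ((\<lambda>x. gdist X A (\<psi> x) x0) ` X)"
proof -
  have X: "X \<noteq> {}" using x0 by blast
  have bounded: "\<And>f x. f \<in> A \<Longrightarrow> supn X f \<le> 1 \<Longrightarrow> x \<in> X \<Longrightarrow> cmod ((f \<circ> \<psi>) x) \<le> 1"
    by (rule norm_comp_le_1[OF A \<psi>])
  have "ess_norm X A (\<lambda>f. f \<circ> \<psi>) \<le> opnorm X A (\<lambda>f x. (f \<circ> \<psi>) x - f x0)"
    by (rule ess_norm_le_opnorm_minus_compact[OF A X compact_operator_on_eval[OF A x0] bounded])
  also have "\<dots> \<le> Sup ((\<lambda>x. gdist X A (\<psi> x) x0) ` X)"
  proof (rule opnorm_le[OF X uniform_algebra_const[OF A]])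
    fix f x assume f: "f \<in> A" "supn X f \<le> 1" and x: "x \<in> X"
    have "cmod (f (\<psi> x) - f x0) \<le> gdist X A (\<psi> x) x0"
      using norm_diff_le_gdist[OF A f _ x0] \<psi> x by blast
    also have "\<dots> \<le> Sup ((\<lambda>x. gdist X A (\<psi> x) x0) ` X)"
    proof (rule cSup_upper)
      show "bdd_above ((\<lambda>x. gdist X A (\<psi> x) x0) ` X)"
        using gdist_le_2[OF A _ x0] \<psi> by (intro bdd_aboveI2[where M=2]) blast
    qed (use x in blast)
    finally show "cmod ((f \<circ> \<psi>) x - f x0) \<le> Sup ((\<lambda>x. gdist X A (\<psi> x) x0) ` X)"
      by simp
  qed
  finally show ?thesis .
qed

lemma funpow_comp_right:
  fixes g :: "'a \<Rightarrow> 'a"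
  shows "(\<lambda>f. f \<circ> g) ^^ n = (\<lambda>f. f \<circ> (g ^^ n))"
  by (induction n) (simp_all add: fun_eq_iff funpow_swap1)

lemma funpow_maps_into:
  assumes "\<forall>x\<in>X. g x \<in> X" "x \<in> X"
  shows "(g ^^ n) x \<in> X"
  using assms by (induction n) auto

theorem lemma4p1:
  fixes X :: "'a::topological_space set" and A :: "('a \<Rightarrow> complex) set"
    and \<phi> :: "'a \<Rightarrow> 'a" and x0 :: 'a
  assumes "uniform_algebra X A"
    and "x0 \<in> X"
    and "\<forall>x\<in>X. \<phi> x \<in> X"
    and "\<forall>f\<in>A. f \<circ> \<phi> \<in> A"
    and "(\<lambda>n. Sup ((\<lambda>x. gdist X A ((\<phi> ^^ n) x) x0) ` X) powr (1 / real n)) \<longlonglongrightarrow> 0"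
  shows "riesz_op X A (\<lambda>f. f \<circ> \<phi>)"
proof -
  txt \<open>Only the values of \<open>f \<circ> \<phi>\<close> on \<open>X\<close> enter the estimate.\<close>
  have X: "X \<noteq> {}" using assms(2) by blast
  have iterate_maps: "\<forall>x\<in>X. (\<phi> ^^ n) x \<in> X" for n
    using funpow_maps_into[OF assms(3)] by blast
  have "ess_norm X A ((\<lambda>f. f \<circ> \<phi>) ^^ n) powr (1 / real n)
      \<le> Sup ((\<lambda>x. gdist X A ((\<phi> ^^ n) x) x0) ` X) powr (1 / real n)" for n
    unfolding funpow_comp_right
    using ess_norm_composition_nonneg[OF assms(1) X iterate_maps]
      ess_norm_composition_le[OF assms(1,2) iterate_maps]
    by (intro powr_mono2) auto
  then show ?thesis
    unfolding riesz_op_def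
    by (intro tendsto_sandwich[OF _ _ tendsto_const assms(5)] always_eventually allI) auto
qed

end
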